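(* Let $\mathcal S$ be a non-degenerate affine zipper with signature $(0,\dots,0)$ whose matrices have dominated splitting of index-1 with multicone $M$. Then for every $\mathbf i\in\Sigma\setminus B$, $$\alpha(\pi(\mathbf i))\le\limsup_{n\to\infty}\frac{\log\|A_{\mathbf i|_n}\|}{\log\lambda_{\mathbf i|_n}}.$$
   Context: Affine zipper with signature $(0,\dots,0)$: $f_i(x)=A_ix+t_i$ ($i=0,\dots,N-1$) on $\mathbb R^d$, $A_i$ invertible, each $f_i$ a contraction, vertices $z_0,\dots,z_N$ with $f_i(z_0)=z_i$, $f_i(z_N)=z_{i+1}$; $\Gamma=\bigcup_if_i(\Gamma)$. Fix a probability vector $\lambda$ with $\lambda_i>0$; $g_i(x)=\lambda_ix+\gamma_i$, $\gamma_i=\sum_{j<i}\lambda_j$; $v:[0,1]\to\mathbb R^d$ the unique continuous function with $v(x)=f_i(v(g_i^{-1}(x)))$ for $x\in g_i([0,1])$; $\alpha(x)=\liminf_{y\to x}\frac{\log\|v(x)-v(y)\|}{\log|x-y|}$. For a word $\bar\imath=i_1\dots i_k$: $A_{\bar\imath}=A_{i_1}\cdots A_{i_k}$, $\lambda_{\bar\imath}=\lambda_{i_1}\cdots\lambda_{i_k}$, $f_{\bar\imath}=f_{i_1}\circ\cdots\circ f_{i_k}$, $\Gamma_{\bar\imath}=f_{\bar\imath}(\Gamma)$. Operator norms are Euclidean. Dominated splitting of index-1: there is a nonempty open $M\subset\mathbb{PR}^{d-1}$ (projective action; $\langle w\rangle$ the line through $w\neq0$) with finitely many components with pairwise disjoint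 closures, $\bigcup_iA_i\overline M\subset M^o$, and some hyperplane transverse to all elements of $\overline M$. $M(x)=\{y\ne x:\langle y-x\rangle\in M\}$. Non-degenerate: there is a bounded open $U$ with $f_i(U)\cap f_j(U)=\emptyset$ ($i\ne j$), $\Gamma\cap U\ne\emptyset$, and $\langle z_N-z_0\rangle\notin\bigcap_{k\ge0}\bigcap_{|\bar\imath|=k}A_{\bar\imath}^{-1}(M^c)$. Symbolic: $\Sigma=\{0,\dots,N-1\}^{\mathbb N}$, shift $\sigma$, $\mathbf i|_n=i_1\dots i_n$; $\pi(\mathbf i)=\sum_{n\ge1}\lambda_{\mathbf i|_{n-1}}\gamma_{i_n}$, $\Pi(\mathbf i)=\lim_nf_{i_1}\circ\cdots\circ f_{i_n}(0)$, so $v(\pi(\mathbf i))=\Pi(\mathbf i)$. Bad set: for $n,l,m\ge1$, $B_{n,l,m}$ is the set of $\mathbf i\in\Sigma$ with $\big(M(\Pi(\mathbf i))\setminus B_{1/n}(\Pi(\mathbf i))\big)\cap\big(\Gamma\setminus(\Gamma_{\mathbf i|_l}\cup\Gamma_{\mathbf i|_{l-1}(i_l-1)(N-1)^m}\cup\Gamma_{\mathbf i|_{l-1}(i_l+1)0^m})\big)=\emptyset$ (open ball $B_r$; $\mathbf i|_{l-1}(i_l-1)(N-1)^m$ is $i_1\dots i_{l-1}$ followed by $i_l-1$ and $m$ copies of $N-1$, similarly the other; the corresponding $\Gamma$-piece is $\emptyset$ if $i_l=0$, resp. $i_l=N-1$). Then $B=\bigcap_{n,l,m\ge1}\bigcup_{K\ge0}\bigcap_{k\ge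 K}\sigma^{-k}B_{n,l,m}$. *)

theory Defs
  imports "HOL-Analysis.Analysis"
begin

text \<open>Projective space PR^{d-1} realised as the set of orthogonal projection matrices onto lines:
  the line through w is identified with the matrix w w^T / (w . w).\<close>

definition proj :: "real^'n \<Rightarrow> real^'n^'n" where
  "proj w = (\<chi> i j. w$i * w$j / (w \<bullet> w))"

definition projspace :: "(real^'n^'n) set" where
  "projspace = proj ` (UNIV - {0})"

definition cone_at :: "(real^'n^'n) set \<Rightarrow> real^'n \<Rightarrow> (real^'n) set" where
  "cone_at M x = {y. y \<noteq> x \<and> proj (y - x) \<in> M}"

definition dominated_index1 :: "nat \<Rightarrow> (nat \<Rightarrow> real^'n^'n) \<Rightarrow> (real^'n^'n) set \<Rightarrow> bool" where
  "dominated_index1 N A M \<longleftrightarrow>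
     M \<noteq> {} \<and> M \<subseteq> projspace \<and> openin (top_of_set projspace) M
   \<and> finite (components M)
   \<and> (\<forall>C\<in>components M. \<forall>C'\<in>components M. C \<noteq> C' \<longrightarrow>
        (top_of_set projspace) closure_of C \<inter> (top_of_set projspace) closure_of C' = {})
   \<and> (\<forall>i<N. \<forall>w. w \<noteq> 0 \<longrightarrow> proj w \<in> (top_of_set projspace) closure_of M \<longrightarrow>
        proj (A i *v w) \<in> (top_of_set projspace) interior_of M)
   \<and> (\<exists>a::real^'n. a \<noteq> 0 \<and> (\<forall>w. w \<noteq> 0 \<longrightarrow> proj w \<in> (top_of_set projspace) closure_of M \<longrightarrow> a \<bullet> w \<noteq> 0))"

text \<open>Words are lists; the first letter is applied outermost.\<close>
definition mat_word :: "(nat \<Rightarrow> real^'n^'n) \<Rightarrow> nat list \<Rightarrow> real^'n^'n" where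
  "mat_word A ws = foldr (\<lambda>i B. A i ** B) ws (mat 1)"

definition wprod :: "(nat \<Rightarrow> real) \<Rightarrow> nat list \<Rightarrow> real" where
  "wprod lam ws = prod_list (map lam ws)"

definition fun_word :: "(nat \<Rightarrow> 'a \<Rightarrow> 'a) \<Rightarrow> nat list \<Rightarrow> 'a \<Rightarrow> 'a" where
  "fun_word f ws = foldr (\<lambda>i g. f i \<circ> g) ws id"

text \<open>Sequences i = i_1 i_2 ... are represented 0-based: omega 0 = i_1.\<close>
definition prefix :: "(nat \<Rightarrow> nat) \<Rightarrow> nat \<Rightarrow> nat list" where
  "prefix \<omega> n = map \<omega> [0..<n]"

definition shift :: "(nat \<Rightarrow> nat) \<Rightarrow> nat \<Rightarrow> nat \<Rightarrow> nat" where
  "shift \<omega> k = (\<lambda>j. \<omega> (j + k))"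

definition seqspace :: "nat \<Rightarrow> (nat \<Rightarrow> nat) set" where
  "seqspace N = {\<omega>. \<forall>j. \<omega> j < N}"

definition gam :: "(nat \<Rightarrow> real) \<Rightarrow> nat \<Rightarrow> real" where
  "gam lam i = (\<Sum>j<i. lam j)"

definition pi_sym :: "(nat \<Rightarrow> real) \<Rightarrow> (nat \<Rightarrow> nat) \<Rightarrow> real" where
  "pi_sym lam \<omega> = (\<Sum>n. wprod lam (prefix \<omega> n) * gam lam (\<omega> n))"

definition Pi_sym :: "(nat \<Rightarrow> real^'n \<Rightarrow> real^'n) \<Rightarrow> (nat \<Rightarrow> nat) \<Rightarrow> real^'n" where
  "Pi_sym f \<omega> = lim (\<lambda>n. fun_word f (prefix \<omega> n) 0)"

definition piece :: "(nat \<Rightarrow> real^'n \<Rightarrow> real^'n) \<Rightarrow> (real^'n) set \<Rightarrow> nat list \<Rightarrow> (real^'n) set" where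
  "piece f \<Gamma> ws = fun_word f ws ` \<Gamma>"

definition bad_nlm :: "nat \<Rightarrow> (nat \<Rightarrow> real^'n \<Rightarrow> real^'n) \<Rightarrow> (real^'n) set \<Rightarrow> (real^'n^'n) set
    \<Rightarrow> nat \<Rightarrow> nat \<Rightarrow> nat \<Rightarrow> (nat \<Rightarrow> nat) set" where
  "bad_nlm N f \<Gamma> M n l m = {\<omega> \<in> seqspace N.
     (cone_at M (Pi_sym f \<omega>) - ball (Pi_sym f \<omega>) (1 / real n)) \<inter>
     (\<Gamma> - (piece f \<Gamma> (prefix \<omega> l)
           \<union> (if \<omega> (l - 1) = 0 then {}
              else piece f \<Gamma> (prefix \<omega> (l - 1) @ [\<omega> (l - 1) - 1] @ replicate m (N - 1)))
           \<union> (if \<omega> (l - 1) = N - 1 then {}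
              else piece f \<Gamma> (prefix \<omega> (l - 1) @ [\<omega> (l - 1) + 1] @ replicate m 0)))) = {}}"

definition bad_set :: "nat \<Rightarrow> (nat \<Rightarrow> real^'n \<Rightarrow> real^'n) \<Rightarrow> (real^'n) set \<Rightarrow> (real^'n^'n) set
    \<Rightarrow> (nat \<Rightarrow> nat) set" where
  "bad_set N f \<Gamma> M = {\<omega>. \<forall>n\<ge>1. \<forall>l\<ge>1. \<forall>m\<ge>1. \<exists>K. \<forall>k\<ge>K. shift \<omega> k \<in> bad_nlm N f \<Gamma> M n l m}"

definition non_degenerate :: "nat \<Rightarrow> (nat \<Rightarrow> real^'n^'n) \<Rightarrow> (nat \<Rightarrow> real^'n \<Rightarrow> real^'n)
    \<Rightarrow> (nat \<Rightarrow> real^'n) \<Rightarrow> (real^'n) set \<Rightarrow> (real^'n^'n) set \<Rightarrow> bool" where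
  "non_degenerate N A f z \<Gamma> M \<longleftrightarrow>
     (\<exists>U. open U \<and> bounded U \<and> (\<forall>i<N. \<forall>j<N. i \<noteq> j \<longrightarrow> f i ` U \<inter> f j ` U = {}) \<and> \<Gamma> \<inter> U \<noteq> {})
   \<and> z N - z 0 \<noteq> 0
   \<and> (\<exists>ws. set ws \<subseteq> {..<N} \<and> proj (mat_word A ws *v (z N - z 0)) \<in> M)"

text \<open>Local Hoelder exponent; log 0 = -infinity is encoded by the value infinity of the quotient.\<close>
definition holder_exp :: "(real \<Rightarrow> 'a::real_normed_vector) \<Rightarrow> real \<Rightarrow> ereal" where
  "holder_exp v x = Liminf (at x within {0..1})
     (\<lambda>y. if v x = v y then \<infinity> else ereal (ln (norm (v x - v y)) / ln \<bar>x - y\<bar>))"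

end

theory Submission
  imports Defs
begin

(*
  Let x = pi(i). Since i is not in the bad set, for some n and infinitely many k there is a point
  y of the attractor lying in the cone M(Pi(sigma^k i)) at distance at least 1/n from
  Pi(sigma^k i). Pulling y back along the first k maps of the zipper gives a parameter s with
  |x - s| <= lambda_{i|k} and v(x) - v(s) = A_{i|k} u for a vector u in the cone of length at least
  1/n. Dominated splitting makes all cone vectors grow comparably under products of the A_i:
  composing a transverse functional with A_{w'} gives, up to a positive factor, a functional from a
  compact set that is bounded below on the image cone A_i(closure M). As the open cone contains a
  ball, |A_{i|k} u| is at least ||A_{i|k}|| / (n Lambda). Hence the Hoelder quotient at s is at most
  log ||A_{i|k}|| / log lambda_{i|k} + O(1/k), and the liminf defining alpha(x) is bounded by the
  limsup of these ratios.
*)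

section \<open>Words and shifts\<close>

lemma fun_word_Nil [simp]: "fun_word f [] = id"
  by (simp add: fun_word_def)

lemma fun_word_Cons [simp]: "fun_word f (i # w) = f i \<circ> fun_word f w"
  by (simp add: fun_word_def)

lemma mat_word_Nil [simp]: "mat_word A [] = mat 1"
  by (simp add: mat_word_def)

lemma mat_word_Cons [simp]: "mat_word A (i # w) = A i ** mat_word A w"
  by (simp add: mat_word_def)

lemma mat_word_append_single: "mat_word A (w @ [i]) = mat_word A w ** A i"
  by (induction w) (simp_all add: matrix_mul_assoc)

lemma wprod_Nil [simp]: "wprod lam [] = 1"
  by (simp add: wprod_def)

lemma wprod_Cons [simp]: "wprod lam (i # w) = lam i * wprod lam w"
  by (simp add: wprod_def)

lemma prefix_0 [simp]: "prefix \<omega> 0 = []"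
  by (simp add: prefix_def)

lemma length_prefix [simp]: "length (prefix \<omega> k) = k"
  by (simp add: prefix_def)

lemma prefix_Suc: "prefix \<omega> (Suc k) = prefix \<omega> k @ [\<omega> k]"
  by (simp add: prefix_def)

lemma prefix_Suc_Cons: "prefix \<omega> (Suc k) = \<omega> 0 # prefix (shift \<omega> 1) k"
  unfolding prefix_def shift_def by (induction k) auto

lemma shift_0 [simp]: "shift \<omega> 0 = \<omega>"
  by (simp add: shift_def)

lemma shift_shift_1: "shift (shift \<omega> 1) k = shift \<omega> (Suc k)"
  by (simp add: shift_def)

lemma set_prefix_subset: "\<omega> \<in> seqspace N \<Longrightarrow> set (prefix \<omega> k) \<subseteq> {..<N}"
  by (auto simp: prefix_def seqspace_def)

lemma shift_in_seqspace: "\<omega> \<in> seqspace N \<Longrightarrow> shift \<omega> k \<in> seqspace N"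
  by (auto simp: shift_def seqspace_def)

lemma fun_word_affine_diff:
  assumes "\<And>i x. f i x = A i *v x + t i"
  shows "fun_word f w x - fun_word f w y = mat_word A w *v (x - y)"
proof (induction w)
  case (Cons i w)
  have "f i a - f i b = A i *v (a - b)" for a b
    by (simp add: assms matrix_vector_mult_diff_distrib)
  with Cons show ?case
    by (simp add: matrix_vector_mul_assoc)
qed (simp add: matrix_vector_mul_lid)

lemma norm_mat_word_le:
  assumes "\<And>i u. i < N \<Longrightarrow> norm (A i *v u) \<le> c * norm u" "0 \<le> c" "set w \<subseteq> {..<N}"
  shows "norm (mat_word A w *v u) \<le> c ^ length w * norm u"
  using assms(3)
proof (induction w arbitrary: u)
  case Nil
  then show ?case by (simp add: matrix_vector_mul_lid)
next
  case (Cons i w)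
  have "norm (mat_word A (i # w) *v u) = norm (A i *v (mat_word A w *v u))"
    by (simp add: matrix_vector_mul_assoc)
  also have "\<dots> \<le> c * norm (mat_word A w *v u)"
    using assms(1) Cons.prems by auto
  also have "\<dots> \<le> c * (c ^ length w * norm u)"
    using Cons by (intro mult_left_mono) (auto simp: assms(2))
  finally show ?case by simp
qed

lemma mat_word_mem:
  assumes "\<And>i u. i < N \<Longrightarrow> u \<in> C \<Longrightarrow> A i *v u \<in> C" "set w \<subseteq> {..<N}" "u \<in> C"
  shows "mat_word A w *v u \<in> C"
  using assms(2,3)
  by (induction w arbitrary: u)
    (auto simp: matrix_vector_mul_lid simp flip: matrix_vector_mul_assoc intro: assms(1))

lemma wprod_pos: "(\<And>i. i < N \<Longrightarrow> 0 < lam i) \<Longrightarrow> set w \<subseteq> {..<N} \<Longrightarrow> 0 < wprod lam w"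
  by (induction w) auto

lemma wprod_le_power:
  assumes "\<And>i. i < N \<Longrightarrow> 0 \<le> lam i \<and> lam i \<le> \<rho>" "set w \<subseteq> {..<N}"
  shows "wprod lam w \<le> \<rho> ^ length w"
  using assms(2)
proof (induction w)
  case (Cons i w)
  have "0 \<le> wprod lam w"
    using Cons.prems assms(1) by (induction w) auto
  with Cons assms(1)[of i] show ?case by (auto intro: mult_mono)
qed simp

section \<open>Coding the parameter interval\<close>

definition gmap :: "(nat \<Rightarrow> real) \<Rightarrow> nat \<Rightarrow> real \<Rightarrow> real" where
  "gmap lam i s = lam i * s + gam lam i"

lemma gmap_word_diff:
  "fun_word (gmap lam) w x - fun_word (gmap lam) w y = wprod lam w * (x - y)"
proof (induction w)
  case (Cons i w)
  have "gmap lam i a - gmap lam i b = lam i * (a - b)" for a b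
    by (simp add: gmap_def algebra_simps)
  with Cons show ?case by simp
qed simp

definition pi_sym_term :: "(nat \<Rightarrow> real) \<Rightarrow> (nat \<Rightarrow> nat) \<Rightarrow> nat \<Rightarrow> real" where
  "pi_sym_term lam \<omega> n = wprod lam (prefix \<omega> n) * gam lam (\<omega> n)"

lemma pi_sym_eq_suminf: "pi_sym lam \<omega> = suminf (pi_sym_term lam \<omega>)"
  by (simp add: pi_sym_def pi_sym_term_def[abs_def])

lemma weights_less_1:
  fixes lam :: "nat \<Rightarrow> real"
  assumes "\<forall>i<N. 0 < lam i" "(\<Sum>i<N. lam i) = 1" "N \<noteq> 1" "i < N"
  shows "lam i < 1"
proof -
  define j :: nat where "j = (if i = 0 then 1 else 0)"
  have "j < N" "j \<noteq> i"
    using assms(3,4) by (auto simp: j_def)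
  have "lam i + lam j = sum lam {i, j}"
    using \<open>j \<noteq> i\<close> by simp
  also have "\<dots> \<le> sum lam {..<N}"
    using assms(1,4) \<open>j < N\<close> by (intro sum_mono2) (auto intro: less_imp_le)
  finally have "lam i + lam j \<le> 1"
    using assms(2) by simp
  moreover have "0 < lam j"
    using assms(1) \<open>j < N\<close> by blast
  ultimately show ?thesis
    by linarith
qed

locale weights =
  fixes N :: nat and lam :: "nat \<Rightarrow> real"
  assumes lam_pos: "\<And>i. i < N \<Longrightarrow> 0 < lam i"
    and lam_sum: "(\<Sum>i<N. lam i) = 1"
    and lam_less_1: "\<And>i. i < N \<Longrightarrow> lam i < 1"
begin

lemma gam_bounds:
  assumes "i < N"
  shows "0 \<le> gam lam i" "gam lam i + lam i \<le> 1"
proof -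
  show "0 \<le> gam lam i"
    unfolding gam_def using assms lam_pos by (intro sum_nonneg) (simp add: less_imp_le)
  have "gam lam i + lam i = (\<Sum>j<Suc i. lam j)"
    by (simp add: gam_def)
  also have "\<dots> \<le> (\<Sum>j<N. lam j)"
    using assms lam_pos by (intro sum_mono2) (auto simp: less_imp_le)
  finally show "gam lam i + lam i \<le> 1"
    using lam_sum by simp
qed

lemma gmap_in_unit:
  assumes "i < N" "s \<in> {0..1}"
  shows "gmap lam i s \<in> {0..1}"
proof -
  have "0 \<le> lam i * s" "lam i * s \<le> lam i"
    using assms lam_pos[of i] by (auto intro: mult_left_le)
  then show ?thesis
    using gam_bounds[OF assms(1)] by (simp add: gmap_def)
qed

lemma gmap_word_in_unit:
  "set w \<subseteq> {..<N} \<Longrightarrow> s \<in> {0..1} \<Longrightarrow> fun_word (gmap lam) w s \<in> {0..1}"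
proof (induction w)
  case (Cons i w)
  then show ?case
    using gmap_in_unit[of i "fun_word (gmap lam) w s"] by simp
qed simp

lemma wprod_prefix_pos: "\<omega> \<in> seqspace N \<Longrightarrow> 0 < wprod lam (prefix \<omega> k)"
  using wprod_pos lam_pos set_prefix_subset by blast

lemma sum_pi_sym_term_le:
  assumes "\<omega> \<in> seqspace N"
  shows "(\<Sum>j<n. pi_sym_term lam \<omega> j) \<le> 1 - wprod lam (prefix \<omega> n)"
proof (induction n)
  case (Suc n)
  have "\<omega> n < N"
    using assms by (simp add: seqspace_def)
  then have "pi_sym_term lam \<omega> n \<le> wprod lam (prefix \<omega> n) * (1 - lam (\<omega> n))"
    unfolding pi_sym_term_def using gam_bounds(2) wprod_prefix_pos[OF assms]
    by (intro mult_left_mono) (auto simp: less_imp_le algebra_simps)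
  with Suc show ?case
    by (simp add: prefix_Suc wprod_def algebra_simps)
qed simp

lemma sum_pi_sym_term_le_1:
  assumes "\<omega> \<in> seqspace N"
  shows "(\<Sum>j<n. pi_sym_term lam \<omega> j) \<le> 1"
  using sum_pi_sym_term_le[OF assms, of n] wprod_prefix_pos[OF assms, of n] by linarith

lemma pi_sym_term_nonneg: "\<omega> \<in> seqspace N \<Longrightarrow> 0 \<le> pi_sym_term lam \<omega> n"
  unfolding pi_sym_term_def
  using wprod_prefix_pos gam_bounds(1) by (simp add: seqspace_def less_imp_le)

lemma summable_pi_sym_term:
  assumes "\<omega> \<in> seqspace N"
  shows "summable (pi_sym_term lam \<omega>)"
  using assms pi_sym_term_nonneg sum_pi_sym_term_le_1 by (intro summableI_nonneg_bounded)

lemma pi_sym_in_unit: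
  assumes "\<omega> \<in> seqspace N"
  shows "pi_sym lam \<omega> \<in> {0..1}"
proof -
  have "0 \<le> pi_sym lam \<omega>"
    unfolding pi_sym_eq_suminf
    using summable_pi_sym_term[OF assms] pi_sym_term_nonneg[OF assms] by (intro suminf_nonneg)
  moreover have "pi_sym lam \<omega> \<le> 1"
    unfolding pi_sym_eq_suminf
    using summable_pi_sym_term[OF assms] sum_pi_sym_term_le_1[OF assms] by (rule suminf_le_const)
  ultimately show ?thesis by simp
qed

lemma pi_sym_shift:
  assumes "\<omega> \<in> seqspace N"
  shows "pi_sym lam \<omega> = gmap lam (\<omega> 0) (pi_sym lam (shift \<omega> 1))"
proof -
  have term_Suc: "pi_sym_term lam \<omega> (Suc n) = lam (\<omega> 0) * pi_sym_term lam (shift \<omega> 1) n" for n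
    by (simp add: pi_sym_term_def prefix_Suc_Cons) (simp add: shift_def)
  have "suminf (pi_sym_term lam \<omega>) = pi_sym_term lam \<omega> 0 + (\<Sum>n. pi_sym_term lam \<omega> (Suc n))"
    using suminf_split_head[OF summable_pi_sym_term[OF assms]] by simp
  also have "(\<Sum>n. pi_sym_term lam \<omega> (Suc n)) = lam (\<omega> 0) * suminf (pi_sym_term lam (shift \<omega> 1))"
    unfolding term_Suc by (rule suminf_mult[OF summable_pi_sym_term[OF shift_in_seqspace[OF assms]]])
  finally show ?thesis
    by (simp add: pi_sym_eq_suminf gmap_def pi_sym_term_def[of lam \<omega> 0])
qed

lemma pi_sym_prefix_shift:
  "\<omega> \<in> seqspace N \<Longrightarrow> pi_sym lam \<omega> = fun_word (gmap lam) (prefix \<omega> k) (pi_sym lam (shift \<omega> k))"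
proof (induction k arbitrary: \<omega>)
  case (Suc k)
  have "pi_sym lam \<omega> = gmap lam (\<omega> 0) (pi_sym lam (shift \<omega> 1))"
    by (rule pi_sym_shift[OF Suc.prems])
  also have "pi_sym lam (shift \<omega> 1)
      = fun_word (gmap lam) (prefix (shift \<omega> 1) k) (pi_sym lam (shift \<omega> (Suc k)))"
    using Suc.IH[OF shift_in_seqspace[OF Suc.prems, of 1]] unfolding shift_shift_1 .
  finally show ?case
    by (simp only: prefix_Suc_Cons fun_word_Cons comp_apply)
qed simp

lemma wprod_prefix_tendsto_0:
  assumes "\<omega> \<in> seqspace N"
  shows "(\<lambda>k. wprod lam (prefix \<omega> k)) \<longlonglongrightarrow> 0"
proof -
  define \<rho> where "\<rho> = Max (insert 0 (lam ` {..<N}))"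
  have "\<rho> \<in> insert 0 (lam ` {..<N})"
    unfolding \<rho>_def by (intro Max_in) auto
  then have "\<rho> < 1"
    using lam_less_1 by auto
  have "0 \<le> \<rho>" and lam_le: "\<And>i. i < N \<Longrightarrow> lam i \<le> \<rho>"
    unfolding \<rho>_def by (auto intro: Max_ge)
  show ?thesis
  proof (rule Lim_null_comparison[OF always_eventually])
    show "\<forall>k. norm (wprod lam (prefix \<omega> k)) \<le> \<rho> ^ k"
    proof
      fix k
      have "wprod lam (prefix \<omega> k) \<le> \<rho> ^ length (prefix \<omega> k)"
        using lam_pos lam_le by (intro wprod_le_power[OF _ set_prefix_subset[OF assms]]) (simp add: less_imp_le)
      then show "norm (wprod lam (prefix \<omega> k)) \<le> \<rho> ^ k"
        using wprod_prefix_pos[OF assms, of k] by simp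
    qed
    show "(\<lambda>k. \<rho> ^ k) \<longlonglongrightarrow> 0"
      using \<open>0 \<le> \<rho>\<close> \<open>\<rho> < 1\<close> by (intro LIMSEQ_power_zero) auto
  qed
qed

lemma ln_wprod_prefix_tendsto:
  assumes "\<omega> \<in> seqspace N"
  shows "filterlim (\<lambda>k. - ln (wprod lam (prefix \<omega> k))) at_top sequentially"
proof -
  have "filterlim (\<lambda>k. wprod lam (prefix \<omega> k)) (at_right 0) sequentially"
    using wprod_prefix_tendsto_0[OF assms] wprod_prefix_pos[OF assms]
    by (intro tendsto_imp_filterlim_at_right) auto
  from filterlim_compose[OF ln_at_0 this] show ?thesis
    by (rule filterlim_uminus_at_bot[THEN iffD1])
qed

end

section \<open>The curve and the attractor\<close>

lemma nonneg_le_scaled_imp_zero: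
  fixes x c :: real
  assumes "0 \<le> x" "x \<le> c * x" "c < 1"
  shows "x = 0"
proof (rule ccontr)
  assume "x \<noteq> 0"
  then have "c * x < 1 * x"
    using assms by (intro mult_strict_right_mono) auto
  then show False
    using assms(2) by simp
qed

lemma contraction_fixpoints_eq:
  assumes "dist (g x) (g y) \<le> c * dist x y" "c < 1" "g x = x" "g y = y"
  shows "x = y"
  using nonneg_le_scaled_imp_zero[of "dist x y" c] assms by simp

lemma uniform_contraction_constant:
  fixes A :: "nat \<Rightarrow> real^'n^'m"
  assumes "\<forall>i<N. \<exists>c<1. \<forall>x y. dist (A i *v x + t i) (A i *v y + t i) \<le> c * dist x y"
  obtains c where "0 \<le> c" "c < 1" "\<And>i u. i < N \<Longrightarrow> norm (A i *v u) \<le> c * norm u"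
proof -
  obtain cf where cf: "\<And>i. i < N \<Longrightarrow> cf i < 1 \<and> (\<forall>x y. dist (A i *v x + t i) (A i *v y + t i) \<le> cf i * dist x y)"
    using assms by metis
  define c where "c = Max (insert 0 (cf ` {..<N}))"
  have "c \<in> insert 0 (cf ` {..<N})"
    unfolding c_def by (intro Max_in) auto
  then have "c < 1"
    using cf by auto
  have "norm (A i *v u) \<le> c * norm u" if "i < N" for i u
  proof -
    have "norm (A i *v u) = dist (A i *v u + t i) (A i *v 0 + t i)"
      by (simp add: dist_norm)
    also have "\<dots> \<le> cf i * norm u"
      using cf[OF that, THEN conjunct2, rule_format, of u 0] by (simp add: dist_norm)
    also have "\<dots> \<le> c * norm u"
      unfolding c_def using that by (intro mult_right_mono Max_ge) auto
    finally show ?thesis .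
  qed
  moreover have "0 \<le> c"
    unfolding c_def by (intro Max_ge) auto
  ultimately show ?thesis
    using that \<open>c < 1\<close> by blast
qed

lemma attractor_subset:
  fixes f :: "nat \<Rightarrow> 'a::heine_borel \<Rightarrow> 'a"
  assumes \<Gamma>: "compact \<Gamma>" "\<Gamma> = (\<Union>i<N. f i ` \<Gamma>)"
    and V: "closed V" "V \<noteq> {}" "\<And>i. i < N \<Longrightarrow> f i ` V \<subseteq> V"
    and contr: "\<And>i x y. i < N \<Longrightarrow> dist (f i x) (f i y) \<le> c * dist x y" "0 \<le> c" "c < 1"
  shows "\<Gamma> \<subseteq> V"
proof (cases "\<Gamma> = {}")
  case False
  have "continuous_on \<Gamma> (\<lambda>y. infdist y V)"
    by (intro continuous_on_infdist continuous_on_id)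
  then obtain y0 where y0: "y0 \<in> \<Gamma>" and y0_max: "\<And>y. y \<in> \<Gamma> \<Longrightarrow> infdist y V \<le> infdist y0 V"
    using continuous_attains_sup[OF \<Gamma>(1) False] by blast
  from y0 \<Gamma>(2) obtain i y1 where "i < N" "y1 \<in> \<Gamma>" "y0 = f i y1"
    by blast
  obtain z where "z \<in> V" "infdist y1 V = dist y1 z"
    using infdist_attains_inf[OF V(1,2)] by blast
  have "f i z \<in> V"
    using V(3)[OF \<open>i < N\<close>] \<open>z \<in> V\<close> by blast
  then have "infdist y0 V \<le> dist (f i y1) (f i z)"
    unfolding \<open>y0 = f i y1\<close> by (rule infdist_le)
  also have "\<dots> \<le> c * infdist y1 V"
    using contr(1)[OF \<open>i < N\<close>] \<open>infdist y1 V = dist y1 z\<close> by simp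
  also have "\<dots> \<le> c * infdist y0 V"
    using y0_max[OF \<open>y1 \<in> \<Gamma>\<close>] contr(2) by (rule mult_left_mono)
  finally have "infdist y0 V = 0"
    using nonneg_le_scaled_imp_zero[OF infdist_nonneg _ contr(3)] by blast
  then have "infdist y V = 0" if "y \<in> \<Gamma>" for y
    using y0_max[OF that] infdist_nonneg[of y V] by linarith
  then show ?thesis
    using in_closed_iff_infdist_zero[OF V(1,2)] by blast
qed simp

locale affine_zipper = weights N lam
  for N :: nat and lam :: "nat \<Rightarrow> real" +
  fixes A :: "nat \<Rightarrow> real^'n^'n" and t :: "nat \<Rightarrow> real^'n" and f :: "nat \<Rightarrow> real^'n \<Rightarrow> real^'n"
    and v :: "real \<Rightarrow> real^'n" and c :: real
  assumes f_affine: "\<And>i x. f i x = A i *v x + t i"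
    and c_nonneg: "0 \<le> c" and c_less_1: "c < 1"
    and norm_A_le: "\<And>i u. i < N \<Longrightarrow> norm (A i *v u) \<le> c * norm u"
    and v_cont: "continuous_on {0..1} v"
    and v_gmap: "\<And>i s. i < N \<Longrightarrow> s \<in> {0..1} \<Longrightarrow> v (gmap lam i s) = f i (v s)"
begin

lemma v_gmap_word:
  "set w \<subseteq> {..<N} \<Longrightarrow> s \<in> {0..1} \<Longrightarrow> v (fun_word (gmap lam) w s) = fun_word f w (v s)"
proof (induction w)
  case (Cons i w)
  then show ?case
    using v_gmap[of i "fun_word (gmap lam) w s"] gmap_word_in_unit[of w s] by simp
qed simp

lemma dist_f_le: "i < N \<Longrightarrow> dist (f i x) (f i y) \<le> c * dist x y"
  using norm_A_le[of i "x - y"] by (simp add: f_affine dist_norm matrix_vector_mult_diff_distrib)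

lemma v_pi_sym:
  assumes \<omega>: "\<omega> \<in> seqspace N"
  shows "v (pi_sym lam \<omega>) = Pi_sym f \<omega>"
proof -
  have "bounded (v ` {0..1})"
    by (intro compact_imp_bounded compact_continuous_image[OF v_cont]) simp
  then obtain B where B: "\<And>s. s \<in> {0..1} \<Longrightarrow> norm (v s) \<le> B"
    unfolding bounded_iff by blast
  have bound: "norm (fun_word f (prefix \<omega> n) 0 - v (pi_sym lam \<omega>)) \<le> c ^ n * B" for n
  proof -
    let ?p = "pi_sym lam (shift \<omega> n)"
    have p: "?p \<in> {0..1}"
      by (rule pi_sym_in_unit[OF shift_in_seqspace[OF \<omega>]])
    have "v (pi_sym lam \<omega>) = fun_word f (prefix \<omega> n) (v ?p)"
      using pi_sym_prefix_shift[OF \<omega>, of n] v_gmap_word[OF set_prefix_subset[OF \<omega>] p] by simp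
    then have "norm (fun_word f (prefix \<omega> n) 0 - v (pi_sym lam \<omega>))
        = norm (mat_word A (prefix \<omega> n) *v (0 - v ?p))"
      by (simp add: fun_word_affine_diff[OF f_affine])
    also have "\<dots> \<le> c ^ n * norm (v ?p)"
      using norm_mat_word_le[where A=A and c=c and u="- v ?p", OF norm_A_le c_nonneg set_prefix_subset[OF \<omega>]]
      by simp
    also have "\<dots> \<le> c ^ n * B"
      using B[OF p] c_nonneg by (intro mult_left_mono) auto
    finally show ?thesis .
  qed
  have geom: "(\<lambda>n. c ^ n * B) \<longlonglongrightarrow> 0"
    using c_nonneg c_less_1 by (intro tendsto_mult_left_zero LIMSEQ_power_zero) auto
  have "(\<lambda>n. fun_word f (prefix \<omega> n) 0 - v (pi_sym lam \<omega>)) \<longlonglongrightarrow> 0"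
    by (rule Lim_null_comparison[OF always_eventually geom]) (use bound in blast)
  then show ?thesis
    unfolding Pi_sym_def by (intro limI[symmetric]) (simp add: LIM_zero_iff)
qed

lemma attractor_subset_curve:
  assumes "compact \<Gamma>" "\<Gamma> = (\<Union>i<N. f i ` \<Gamma>)"
  shows "\<Gamma> \<subseteq> v ` {0..1}"
proof (rule attractor_subset[OF assms])
  show "closed (v ` {0..1})"
    by (intro compact_imp_closed compact_continuous_image[OF v_cont]) simp
  show "f i ` v ` {0..1} \<subseteq> v ` {0..1}" if "i < N" for i
  proof
    fix y assume "y \<in> f i ` v ` {0..1}"
    then obtain s where "s \<in> {0..1}" "y = f i (v s)"
      by blast
    then show "y \<in> v ` {0..1}"
      using v_gmap[OF that] gmap_in_unit[OF that] by (metis image_eqI)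
  qed
qed (use dist_f_le c_nonneg c_less_1 in auto)

end

section \<open>Cones of a dominated splitting\<close>

lemma invertible_mult_nonzero: "invertible (B::real^'n^'n) \<Longrightarrow> x \<noteq> 0 \<Longrightarrow> B *v x \<noteq> 0"
  by (metis invertible_left_inverse matrix_left_invertible_ker)

lemma proj_scaleR: "c \<noteq> 0 \<Longrightarrow> proj (c *\<^sub>R u) = proj u"
  unfolding proj_def by (simp add: vec_eq_iff power2_eq_square)

lemma continuous_on_proj: "continuous_on (UNIV - {0}) (proj :: real^'n \<Rightarrow> real^'n^'n)"
  unfolding proj_def
  by (intro continuous_on_vec_lambda continuous_on_divide continuous_on_mult
      continuous_on_component continuous_on_inner continuous_on_id) auto

lemma open_proj_preimage:
  assumes "openin (top_of_set projspace) S"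
  shows "open {u::real^'n. u \<noteq> 0 \<and> proj u \<in> S}"
proof -
  have "openin (top_of_set (proj ` (UNIV - {0}))) S"
    using assms by (simp add: projspace_def)
  then have "openin (top_of_set (UNIV - {0})) ((UNIV - {0}) \<inter> proj -` S)"
    using continuous_on_open[THEN iffD1, OF continuous_on_proj] by blast
  moreover have "(UNIV - {0}) \<inter> proj -` S = {u. u \<noteq> 0 \<and> proj u \<in> S}"
    by auto
  ultimately show ?thesis
    using openin_open_trans[OF _ open_delete[OF open_UNIV]] by simp
qed

lemma compact_sphere_proj_preimage:
  assumes "closedin (top_of_set projspace) S"
  shows "compact (sphere 0 1 \<inter> {u::real^'n. u \<noteq> 0 \<and> proj u \<in> S})"
proof -
  have "closedin (top_of_set (UNIV - {0})) ((UNIV - {0}) \<inter> proj -` S)"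
    using continuous_on_imp_closedin[OF continuous_on_proj] assms by (simp add: projspace_def)
  then obtain F where "closed F" and F: "(UNIV - {0}) \<inter> proj -` S = (UNIV - {0}) \<inter> F"
    unfolding closedin_closed by blast
  have "sphere 0 1 \<inter> {u. u \<noteq> 0 \<and> proj u \<in> S} = sphere 0 1 \<inter> F"
  proof (intro equalityI subsetI)
    fix x assume "x \<in> sphere 0 1 \<inter> {u. u \<noteq> 0 \<and> proj u \<in> S}"
    then show "x \<in> sphere 0 1 \<inter> F"
      using F by blast
  next
    fix x assume x: "x \<in> sphere 0 1 \<inter> F"
    then have "x \<noteq> 0"
      by auto
    then show "x \<in> sphere 0 1 \<inter> {u. u \<noteq> 0 \<and> proj u \<in> S}"
      using F x by blast
  qed
  then show ?thesis
    using \<open>closed F\<close> by (simp add: compact_Int_closed)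
qed

lemma compact_uniform_pos:
  assumes "compact S" "continuous_on S g" "\<And>x. x \<in> S \<Longrightarrow> 0 < g x"
  obtains \<delta> :: real where "0 < \<delta>" "\<And>x. x \<in> S \<Longrightarrow> \<delta> \<le> g x"
proof (cases "S = {}")
  case False
  then obtain x0 where "x0 \<in> S" "\<And>x. x \<in> S \<Longrightarrow> g x0 \<le> g x"
    using continuous_attains_inf[OF assms(1) False assms(2)] by blast
  then show ?thesis
    using that assms(3) by blast
qed (use that[of 1] in simp)

lemma matrices_bounded:
  fixes A :: "nat \<Rightarrow> real^'n^'m"
  obtains C where "0 \<le> C" "\<And>i x. i < N \<Longrightarrow> norm (A i *v x) \<le> C * norm x"
proof
  let ?C = "\<Sum>i<N. onorm (\<lambda>x. A i *v x)"
  show "0 \<le> ?C"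
    by (intro sum_nonneg onorm_pos_le matrix_vector_mul_bounded_linear)
  fix i x assume "i < N"
  have "onorm (\<lambda>x. A i *v x) \<le> ?C"
    using \<open>i < N\<close> by (intro member_le_sum) (auto intro: onorm_pos_le matrix_vector_mul_bounded_linear)
  then show "norm (A i *v x) \<le> ?C * norm x"
    using onorm[OF matrix_vector_mul_bounded_linear, of "A i" x]
    by (meson mult_right_mono norm_ge_zero order_trans)
qed

lemma inner_zero_perturb:
  fixes \<psi> p :: "'a::real_inner"
  assumes "0 < r" "ball p r \<subseteq> S" "norm \<psi> = 1" "\<psi> \<bullet> p = 0"
  obtains \<epsilon> where "0 < \<epsilon>" "\<And>\<phi>. dist \<phi> \<psi> < \<epsilon> \<Longrightarrow> \<exists>q\<in>S. \<phi> \<bullet> q = 0"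
proof
  define \<epsilon> where "\<epsilon> = r / (2 * (norm p + r))"
  have "0 < norm p + r"
    using assms(1) norm_ge_zero[of p] by linarith
  then show "0 < \<epsilon>"
    using assms(1) by (simp add: \<epsilon>_def)
  fix \<phi> assume "dist \<phi> \<psi> < \<epsilon>"
  define h where "h = (r / 2) *\<^sub>R \<psi>"
  have h: "norm h = r / 2" "\<psi> \<bullet> h = r / 2"
    using assms(1,3) by (simp_all add: h_def dot_square_norm)
  have close: "\<bar>\<phi> \<bullet> x - \<psi> \<bullet> x\<bar> < r / 2" if "norm x \<le> norm p + r / 2" for x
  proof -
    have "\<bar>\<phi> \<bullet> x - \<psi> \<bullet> x\<bar> \<le> norm (\<phi> - \<psi>) * norm x"
      by (metis Cauchy_Schwarz_ineq2 inner_diff_left)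
    also have "\<dots> \<le> \<epsilon> * (norm p + r / 2)"
      using \<open>dist \<phi> \<psi> < \<epsilon>\<close> \<open>0 < \<epsilon>\<close> that by (intro mult_mono) (auto simp: dist_norm)
    also have "\<dots> < \<epsilon> * (norm p + r)"
      using \<open>0 < \<epsilon>\<close> assms(1) by simp
    also have "\<dots> = r / 2"
      using \<open>0 < norm p + r\<close> unfolding \<epsilon>_def
      by (metis divide_divide_eq_left nonzero_eq_divide_eq order_less_irrefl)
    finally show ?thesis .
  qed
  txt \<open>phi takes values of opposite signs at p + h and p - h, so it vanishes between them, inside
    the ball.\<close>
  define P where "P = \<phi> \<bullet> p"
  define H where "H = \<phi> \<bullet> h"
  have "\<bar>P + H - r / 2\<bar> < r / 2" "\<bar>P - H + r / 2\<bar> < r / 2"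
    using close[of "p + h"] close[of "p - h"] norm_triangle_ineq[of p h] norm_triangle_ineq4[of p h]
      h assms(4)
    by (simp_all add: P_def H_def inner_add_right inner_diff_right)
  then have "0 < H" "\<bar>P\<bar> < H"
    by linarith+
  define q where "q = p - (P / H) *\<^sub>R h"
  have "dist p q = \<bar>P / H\<bar> * norm h"
    by (simp add: q_def dist_norm)
  also have "\<dots> < 1 * norm h"
    using \<open>0 < H\<close> \<open>\<bar>P\<bar> < H\<close> h(1) assms(1)
    by (intro mult_strict_right_mono) (auto simp: abs_divide divide_less_eq)
  also have "\<dots> < r"
    using h(1) assms(1) by simp
  finally have "q \<in> S"
    using assms(2) by auto
  moreover have "\<phi> \<bullet> q = 0"
    using \<open>0 < H\<close> by (simp add: q_def P_def H_def inner_diff_right)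
  ultimately show "\<exists>q\<in>S. \<phi> \<bullet> q = 0" by blast
qed

lemma onorm_le_of_ball:
  fixes B :: "'a::{real_normed_vector, perfect_space} \<Rightarrow> 'b::real_normed_vector"
  assumes "linear B" "0 < r" "ball p r \<subseteq> S" "0 \<le> K"
    and bound: "\<And>q. q \<in> S \<Longrightarrow> norm (B q) \<le> K * norm q"
  shows "onorm B \<le> 2 * K * (2 * norm p + r) / r"
proof (rule onorm_le)
  fix x
  show "norm (B x) \<le> 2 * K * (2 * norm p + r) / r * norm x"
  proof (cases "x = 0")
    case True
    then show ?thesis using linear_0[OF assms(1)] by simp
  next
    case False
    define q where "q = p + (r / (2 * norm x)) *\<^sub>R x"
    have "dist p q = r / 2"
      using False assms(2) by (simp add: q_def dist_norm)
    then have "q \<in> S"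
      using assms(2,3) by auto
    have "p \<in> S"
      using assms(2,3) by auto
    have "x = (2 * norm x / r) *\<^sub>R (q - p)"
      using False assms(2) by (simp add: q_def)
    then have "B x = (2 * norm x / r) *\<^sub>R (B q - B p)"
      by (metis assms(1) linear_diff linear_scale)
    then have "norm (B x) = (2 * norm x / r) * norm (B q - B p)"
      using assms(2) by simp
    also have "\<dots> \<le> (2 * norm x / r) * (K * norm q + K * norm p)"
      using norm_triangle_ineq4[of "B q" "B p"] bound[OF \<open>q \<in> S\<close>] bound[OF \<open>p \<in> S\<close>] assms(2)
      by (intro mult_left_mono) auto
    also have "\<dots> \<le> (2 * norm x / r) * (K * (2 * norm p + r))"
    proof -
      have "norm q \<le> norm p + r"
        using \<open>dist p q = r / 2\<close> norm_triangle_ineq2[of q p] assms(2)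
        by (simp add: dist_norm norm_minus_commute)
      from mult_left_mono[OF this assms(4)]
      have "K * norm q + K * norm p \<le> K * (2 * norm p + r)"
        by (simp add: algebra_simps)
      then show ?thesis
        using assms(2) by (intro mult_left_mono) auto
    qed
    finally show ?thesis
      by (simp add: field_simps)
  qed
qed

locale dominated =
  fixes N :: nat and A :: "nat \<Rightarrow> real^'n^'n" and M :: "(real^'n^'n) set"
  assumes dominated: "dominated_index1 N A M"
    and A_invertible: "\<And>i. i < N \<Longrightarrow> invertible (A i)"
begin

abbreviation PR :: "(real^'n^'n) topology" where
  "PR \<equiv> top_of_set projspace"

definition Mcone :: "(real^'n) set" where
  "Mcone = {u. u \<noteq> 0 \<and> proj u \<in> M}"

definition Mcone_closure :: "(real^'n) set" where
  "Mcone_closure = {u. u \<noteq> 0 \<and> proj u \<in> PR closure_of M}"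

definition Mcone_interior :: "(real^'n) set" where
  "Mcone_interior = {u. u \<noteq> 0 \<and> proj u \<in> PR interior_of M}"

lemma M_subset: "M \<subseteq> projspace"
  using dominated by (simp add: dominated_index1_def)

lemma open_Mcone: "open Mcone"
  unfolding Mcone_def
  by (rule open_proj_preimage) (use dominated in \<open>simp add: dominated_index1_def\<close>)

lemma open_Mcone_interior: "open Mcone_interior"
  unfolding Mcone_interior_def by (intro open_proj_preimage openin_interior_of)

lemma compact_sphere_Mcone_closure: "compact (sphere 0 1 \<inter> Mcone_closure)"
  unfolding Mcone_closure_def by (intro compact_sphere_proj_preimage closedin_closure_of)

lemma Mcone_subset_closure: "Mcone \<subseteq> Mcone_closure"
  using closure_of_subset[of M PR] M_subset by (auto simp: Mcone_def Mcone_closure_def)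

lemma Mcone_interior_subset_closure: "Mcone_interior \<subseteq> Mcone_closure"
  using interior_of_subset_closure_of[of PR M] by (auto simp: Mcone_interior_def Mcone_closure_def)

lemma Mcone_nonempty: "Mcone \<noteq> {}"
  using dominated by (auto simp: dominated_index1_def projspace_def Mcone_def)

lemma Mcone_closure_nonzero: "u \<in> Mcone_closure \<Longrightarrow> u \<noteq> 0"
  by (simp add: Mcone_closure_def)

lemma scaleR_Mcone_closure: "u \<in> Mcone_closure \<Longrightarrow> a \<noteq> 0 \<Longrightarrow> a *\<^sub>R u \<in> Mcone_closure"
  by (auto simp: Mcone_closure_def proj_scaleR)

lemma normalize_Mcone_closure: "u \<in> Mcone_closure \<Longrightarrow> u /\<^sub>R norm u \<in> sphere 0 1 \<inter> Mcone_closure"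
  using scaleR_Mcone_closure[of u "inverse (norm u)"] Mcone_closure_nonzero[of u] by auto

lemma A_Mcone_closure: "i < N \<Longrightarrow> u \<in> Mcone_closure \<Longrightarrow> A i *v u \<in> Mcone_interior"
  using dominated invertible_mult_nonzero[OF A_invertible]
  by (auto simp: dominated_index1_def Mcone_closure_def Mcone_interior_def)

lemma mat_word_Mcone_closure:
  "set w \<subseteq> {..<N} \<Longrightarrow> u \<in> Mcone_closure \<Longrightarrow> mat_word A w *v u \<in> Mcone_closure"
  using mat_word_mem[where N=N and A=A and C=Mcone_closure] A_Mcone_closure Mcone_interior_subset_closure by blast

definition transversal :: "real^'n" where
  "transversal = (SOME a. a \<noteq> 0 \<and> (\<forall>w. w \<noteq> 0 \<longrightarrow> proj w \<in> PR closure_of M \<longrightarrow> a \<bullet> w \<noteq> 0))"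

lemma transversal_inner_nonzero: "u \<in> Mcone_closure \<Longrightarrow> transversal \<bullet> u \<noteq> 0"
proof -
  have "\<exists>a. a \<noteq> 0 \<and> (\<forall>w. w \<noteq> 0 \<longrightarrow> proj w \<in> PR closure_of M \<longrightarrow> a \<bullet> w \<noteq> 0)"
    using dominated by (simp add: dominated_index1_def)
  from someI_ex[OF this] show "u \<in> Mcone_closure \<Longrightarrow> transversal \<bullet> u \<noteq> 0"
    by (auto simp: transversal_def Mcone_closure_def)
qed

lemma transversal_lower_bound:
  obtains \<delta> where "0 < \<delta>" "\<And>u. u \<in> Mcone_closure \<Longrightarrow> \<delta> * norm u \<le> \<bar>transversal \<bullet> u\<bar>"
proof -
  have "continuous_on (sphere 0 1 \<inter> Mcone_closure) (\<lambda>u. \<bar>transversal \<bullet> u\<bar>)"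
    by (intro continuous_intros)
  moreover have "0 < \<bar>transversal \<bullet> u\<bar>" if "u \<in> sphere 0 1 \<inter> Mcone_closure" for u
    using transversal_inner_nonzero that by simp
  ultimately obtain \<delta> where "0 < \<delta>"
    and \<delta>: "\<And>u. u \<in> sphere 0 1 \<inter> Mcone_closure \<Longrightarrow> \<delta> \<le> \<bar>transversal \<bullet> u\<bar>"
    using compact_uniform_pos[OF compact_sphere_Mcone_closure] by blast
  have "\<delta> * norm u \<le> \<bar>transversal \<bullet> u\<bar>" if "u \<in> Mcone_closure" for u
    using \<delta>[OF normalize_Mcone_closure[OF that]] Mcone_closure_nonzero[OF that]
    by (simp add: field_simps)
  with \<open>0 < \<delta>\<close> show ?thesis using that by blast
qed

definition dual_directions :: "(real^'n) set" where
  "dual_directions = closure ({\<psi>. \<forall>u\<in>Mcone_closure. \<psi> \<bullet> u \<noteq> 0} \<inter> sphere 0 1)"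

lemma dual_directions_sphere: "dual_directions \<subseteq> sphere 0 1"
  unfolding dual_directions_def by (rule closure_minimal) auto

lemma compact_dual_directions: "compact dual_directions"
  unfolding dual_directions_def by (simp add: compact_closure bounded_Int)

text \<open>Limits of transverse hyperplanes can touch the closed cone, but not its image, which lies in
  the open interior.\<close>

lemma dual_directions_A_nonzero:
  assumes "i < N" "\<psi> \<in> dual_directions" "u \<in> Mcone_closure"
  shows "\<psi> \<bullet> (A i *v u) \<noteq> 0"
proof
  assume zero: "\<psi> \<bullet> (A i *v u) = 0"
  obtain r where "0 < r" "ball (A i *v u) r \<subseteq> Mcone_interior"
    using open_Mcone_interior A_Mcone_closure[OF assms(1,3)] open_contains_ball by blast
  then have ball: "ball (A i *v u) r \<subseteq> Mcone_closure"
    using Mcone_interior_subset_closure by blast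
  have "norm \<psi> = 1"
    using dual_directions_sphere assms(2) by auto
  then obtain \<epsilon> where "0 < \<epsilon>" and \<epsilon>: "\<And>\<phi>. dist \<phi> \<psi> < \<epsilon> \<Longrightarrow> \<exists>q\<in>Mcone_closure. \<phi> \<bullet> q = 0"
    using inner_zero_perturb[OF \<open>0 < r\<close> ball _ zero] by blast
  obtain \<phi> where "\<phi> \<in> {\<psi>. \<forall>u\<in>Mcone_closure. \<psi> \<bullet> u \<noteq> 0}" "dist \<phi> \<psi> < \<epsilon>"
    using assms(2) \<open>0 < \<epsilon>\<close> unfolding dual_directions_def closure_approachable by blast
  then show False
    using \<epsilon> by blast
qed

lemma dual_directions_lower_bound:
  obtains \<eta> where "0 < \<eta>"
    "\<And>i \<psi> u. i < N \<Longrightarrow> \<psi> \<in> dual_directions \<Longrightarrow> u \<in> Mcone_closure \<Longrightarrow>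
       \<eta> * norm u \<le> \<bar>\<psi> \<bullet> (A i *v u)\<bar>"
proof -
  have "\<exists>\<eta>>0. \<forall>\<psi>\<in>dual_directions. \<forall>u\<in>Mcone_closure. \<eta> * norm u \<le> \<bar>\<psi> \<bullet> (A i *v u)\<bar>"
    if "i < N" for i
  proof -
    let ?S = "dual_directions \<times> (sphere 0 1 \<inter> Mcone_closure)"
    have "continuous_on ?S (\<lambda>z. \<bar>fst z \<bullet> (A i *v snd z)\<bar>)"
      by (intro continuous_intros bounded_linear.continuous_on[OF matrix_vector_mul_bounded_linear])
    moreover have "0 < \<bar>fst z \<bullet> (A i *v snd z)\<bar>" if "z \<in> ?S" for z
      using dual_directions_A_nonzero[OF \<open>i < N\<close>] that by auto
    ultimately obtain \<eta> where "0 < \<eta>" and \<eta>: "\<And>z. z \<in> ?S \<Longrightarrow> \<eta> \<le> \<bar>fst z \<bullet> (A i *v snd z)\<bar>"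
      using compact_uniform_pos[OF compact_Times[OF compact_dual_directions compact_sphere_Mcone_closure]]
      by blast
    have "\<eta> * norm u \<le> \<bar>\<psi> \<bullet> (A i *v u)\<bar>" if "\<psi> \<in> dual_directions" "u \<in> Mcone_closure" for \<psi> u
      using \<eta>[of "(\<psi>, u /\<^sub>R norm u)"] that normalize_Mcone_closure[OF that(2)]
        Mcone_closure_nonzero[OF that(2)]
      by (simp add: matrix_vector_mult_scaleR abs_mult field_simps)
    with \<open>0 < \<eta>\<close> show ?thesis by blast
  qed
  then obtain \<eta> where \<eta>: "\<And>i. i < N \<Longrightarrow> 0 < \<eta> i \<and>
      (\<forall>\<psi>\<in>dual_directions. \<forall>u\<in>Mcone_closure. \<eta> i * norm u \<le> \<bar>\<psi> \<bullet> (A i *v u)\<bar>)"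
    by metis
  define \<eta>0 where "\<eta>0 = Min (insert 1 (\<eta> ` {..<N}))"
  have "0 < \<eta>0"
    unfolding \<eta>0_def using \<eta> by (subst Min_gr_iff) auto
  moreover have "\<eta>0 * norm u \<le> \<bar>\<psi> \<bullet> (A i *v u)\<bar>"
    if "i < N" "\<psi> \<in> dual_directions" "u \<in> Mcone_closure" for i \<psi> u
  proof -
    have "\<eta>0 \<le> \<eta> i"
      unfolding \<eta>0_def using that(1) by (intro Min_le) auto
    then show ?thesis
      using \<eta>[OF that(1)] that(2,3) by (meson mult_right_mono norm_ge_zero order_trans)
  qed
  ultimately show ?thesis using that by blast
qed

lemma transversal_mat_word_snoc:
  assumes "set w \<subseteq> {..<N}"
  obtains \<psi> s where "\<psi> \<in> dual_directions" "0 < s"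
    "\<And>x. transversal \<bullet> (mat_word A (w @ [i]) *v x) = s * (\<psi> \<bullet> (A i *v x))"
proof -
  define \<phi> where "\<phi> = transversal v* mat_word A w"
  have \<phi>: "\<phi> \<bullet> x = transversal \<bullet> (mat_word A w *v x)" for x
    by (simp add: \<phi>_def dot_lmul_matrix)
  have \<phi>_nonzero: "\<phi> \<bullet> x \<noteq> 0" if "x \<in> Mcone_closure" for x
    using \<phi> transversal_inner_nonzero mat_word_Mcone_closure[OF assms that] by simp
  then have "\<phi> \<noteq> 0"
    using Mcone_nonempty Mcone_subset_closure by fastforce
  define \<psi> where "\<psi> = \<phi> /\<^sub>R norm \<phi>"
  have "\<psi> \<in> {\<psi>. \<forall>u\<in>Mcone_closure. \<psi> \<bullet> u \<noteq> 0} \<inter> sphere 0 1"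
    using \<phi>_nonzero \<open>\<phi> \<noteq> 0\<close> by (auto simp: \<psi>_def)
  then have "\<psi> \<in> dual_directions"
    unfolding dual_directions_def by (rule closure_subset[THEN subsetD])
  moreover have "0 < norm \<phi>"
    using \<open>\<phi> \<noteq> 0\<close> by simp
  moreover have "transversal \<bullet> (mat_word A (w @ [i]) *v x) = norm \<phi> * (\<psi> \<bullet> (A i *v x))" for x
    using \<open>\<phi> \<noteq> 0\<close> by (simp add: \<psi>_def \<phi> mat_word_append_single flip: matrix_vector_mul_assoc)
  ultimately show ?thesis
    by (rule that)
qed

text \<open>The common scale of a word w = w' i is the length of the functional transversal \<circ> A_w'.\<close>

lemma mat_word_Mcone_scale:
  obtains \<kappa> K where "0 < \<kappa>" "0 \<le> K"
    "\<And>w. w \<noteq> [] \<Longrightarrow> set w \<subseteq> {..<N} \<Longrightarrow> \<exists>s>0. \<forall>u\<in>Mcone_closure.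
       \<kappa> * s * norm u \<le> norm (mat_word A w *v u) \<and> norm (mat_word A w *v u) \<le> K * s * norm u"
proof -
  obtain \<delta> where "0 < \<delta>" and \<delta>: "\<And>u. u \<in> Mcone_closure \<Longrightarrow> \<delta> * norm u \<le> \<bar>transversal \<bullet> u\<bar>"
    using transversal_lower_bound by blast
  obtain \<eta> where "0 < \<eta>" and \<eta>: "\<And>i \<psi> u. i < N \<Longrightarrow> \<psi> \<in> dual_directions \<Longrightarrow> u \<in> Mcone_closure \<Longrightarrow>
      \<eta> * norm u \<le> \<bar>\<psi> \<bullet> (A i *v u)\<bar>"
    using dual_directions_lower_bound by blast
  obtain C where "0 \<le> C" and C: "\<And>i x. i < N \<Longrightarrow> norm (A i *v x) \<le> C * norm x"
    using matrices_bounded by blast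
  have "transversal \<noteq> 0"
    using transversal_inner_nonzero Mcone_nonempty Mcone_subset_closure by fastforce
  show ?thesis
  proof
    show "0 < \<eta> / norm transversal" "0 \<le> C / \<delta>"
      using \<open>0 < \<eta>\<close> \<open>transversal \<noteq> 0\<close> \<open>0 < \<delta>\<close> \<open>0 \<le> C\<close> by auto
    fix w assume w: "w \<noteq> []" "set w \<subseteq> {..<N}"
    obtain w' i where "w = w' @ [i]"
      using w(1) by (metis rev_exhaust)
    with w(2) have "i < N" "set w' \<subseteq> {..<N}"
      by auto
    then obtain \<psi> s where "\<psi> \<in> dual_directions" "0 < s"
      and s: "\<And>x. transversal \<bullet> (mat_word A w *v x) = s * (\<psi> \<bullet> (A i *v x))"
      using transversal_mat_word_snoc \<open>w = w' @ [i]\<close> by metis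
    have "norm \<psi> = 1"
      using \<open>\<psi> \<in> dual_directions\<close> dual_directions_sphere by auto
    have "\<eta> / norm transversal * s * norm u \<le> norm (mat_word A w *v u)
        \<and> norm (mat_word A w *v u) \<le> C / \<delta> * s * norm u" if u: "u \<in> Mcone_closure" for u
    proof
      have "s * (\<eta> * norm u) \<le> s * \<bar>\<psi> \<bullet> (A i *v u)\<bar>"
        using \<eta>[OF \<open>i < N\<close> \<open>\<psi> \<in> dual_directions\<close> u] \<open>0 < s\<close> by simp
      also have "\<dots> = \<bar>transversal \<bullet> (mat_word A w *v u)\<bar>"
        using \<open>0 < s\<close> by (simp add: s abs_mult)
      also have "\<dots> \<le> norm transversal * norm (mat_word A w *v u)"
        by (rule Cauchy_Schwarz_ineq2)
      finally show "\<eta> / norm transversal * s * norm u \<le> norm (mat_word A w *v u)"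
        using \<open>transversal \<noteq> 0\<close> by (simp add: field_simps)
      have "\<delta> * norm (mat_word A w *v u) \<le> \<bar>transversal \<bullet> (mat_word A w *v u)\<bar>"
        using \<delta> mat_word_Mcone_closure[OF w(2) u] by blast
      also have "\<dots> = s * \<bar>\<psi> \<bullet> (A i *v u)\<bar>"
        using \<open>0 < s\<close> by (simp add: s abs_mult)
      also have "\<dots> \<le> s * (C * norm u)"
        using Cauchy_Schwarz_ineq2[of \<psi> "A i *v u"] C[OF \<open>i < N\<close>, of u] \<open>norm \<psi> = 1\<close> \<open>0 < s\<close>
        by (intro mult_left_mono) auto
      finally show "norm (mat_word A w *v u) \<le> C / \<delta> * s * norm u"
        using \<open>0 < \<delta>\<close> by (simp add: field_simps)
    qed
    with \<open>0 < s\<close> show "\<exists>s>0. \<forall>u\<in>Mcone_closure. \<eta> / norm transversal * s * norm u \<le> norm (mat_word A w *v u)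
        \<and> norm (mat_word A w *v u) \<le> C / \<delta> * s * norm u"
      by blast
  qed
qed

lemma mat_word_Mcone_comparable:
  obtains R where "0 \<le> R"
    "\<And>w u u'. w \<noteq> [] \<Longrightarrow> set w \<subseteq> {..<N} \<Longrightarrow> u \<in> Mcone_closure \<Longrightarrow> u' \<in> Mcone_closure \<Longrightarrow>
       norm (mat_word A w *v u') * norm u \<le> R * (norm (mat_word A w *v u) * norm u')"
proof -
  obtain \<kappa> K where "0 < \<kappa>" "0 \<le> K" and scale: "\<And>w. w \<noteq> [] \<Longrightarrow> set w \<subseteq> {..<N} \<Longrightarrow>
      \<exists>s>0. \<forall>u\<in>Mcone_closure. \<kappa> * s * norm u \<le> norm (mat_word A w *v u)
        \<and> norm (mat_word A w *v u) \<le> K * s * norm u"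
    using mat_word_Mcone_scale by blast
  show ?thesis
  proof
    show "0 \<le> K / \<kappa>"
      using \<open>0 < \<kappa>\<close> \<open>0 \<le> K\<close> by simp
    fix w u u' assume w: "w \<noteq> []" "set w \<subseteq> {..<N}" and u: "u \<in> Mcone_closure" "u' \<in> Mcone_closure"
    obtain s where "0 < s" and s: "\<And>u. u \<in> Mcone_closure \<Longrightarrow> \<kappa> * s * norm u \<le> norm (mat_word A w *v u)
        \<and> norm (mat_word A w *v u) \<le> K * s * norm u"
      using scale[OF w] by blast
    have "norm (mat_word A w *v u') * norm u \<le> K * s * norm u' * norm u"
      using s[OF u(2)] by (simp add: mult_right_mono)
    also have "\<dots> = K / \<kappa> * (\<kappa> * s * norm u) * norm u'"
      using \<open>0 < \<kappa>\<close> by (simp add: field_simps)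
    also have "\<dots> \<le> K / \<kappa> * norm (mat_word A w *v u) * norm u'"
      using s[OF u(1)] \<open>0 < \<kappa>\<close> \<open>0 \<le> K\<close> by (intro mult_right_mono mult_left_mono) auto
    finally show "norm (mat_word A w *v u') * norm u \<le> K / \<kappa> * (norm (mat_word A w *v u) * norm u')"
      by (simp add: mult_ac)
  qed
qed

text \<open>Because the open cone contains a ball, comparability on the cone controls the full operator
  norm.\<close>

lemma onorm_mat_word_Mcone:
  obtains \<Lambda> where "1 \<le> \<Lambda>"
    "\<And>w u. w \<noteq> [] \<Longrightarrow> set w \<subseteq> {..<N} \<Longrightarrow> u \<in> Mcone \<Longrightarrow>
       onorm (\<lambda>x. mat_word A w *v x) * norm u \<le> \<Lambda> * norm (mat_word A w *v u)"
proof -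
  obtain R where "0 \<le> R" and R: "\<And>w u u'. w \<noteq> [] \<Longrightarrow> set w \<subseteq> {..<N} \<Longrightarrow> u \<in> Mcone_closure \<Longrightarrow>
      u' \<in> Mcone_closure \<Longrightarrow> norm (mat_word A w *v u') * norm u \<le> R * (norm (mat_word A w *v u) * norm u')"
    using mat_word_Mcone_comparable by blast
  obtain p where "p \<in> Mcone"
    using Mcone_nonempty by blast
  then obtain r where "0 < r" "ball p r \<subseteq> Mcone"
    using open_Mcone open_contains_ball by blast
  then have ball: "ball p r \<subseteq> Mcone_closure"
    using Mcone_subset_closure by blast
  define L where "L = 2 * R * (2 * norm p + r) / r"
  show ?thesis
  proof (rule that[of "max 1 L"])
    fix w u assume w: "w \<noteq> []" "set w \<subseteq> {..<N}" and "u \<in> Mcone"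
    then have u: "u \<in> Mcone_closure" "0 < norm u"
      using Mcone_subset_closure Mcone_closure_nonzero by auto
    define K where "K = R * norm (mat_word A w *v u) / norm u"
    have "onorm (\<lambda>x. mat_word A w *v x) \<le> 2 * K * (2 * norm p + r) / r"
    proof (rule onorm_le_of_ball[OF matrix_vector_mul_linear \<open>0 < r\<close> ball])
      show "0 \<le> K"
        using \<open>0 \<le> R\<close> by (simp add: K_def)
      show "norm (mat_word A w *v q) \<le> K * norm q" if "q \<in> Mcone_closure" for q
        using R[OF w u(1) that] u(2) by (simp add: K_def field_simps)
    qed
    also have "\<dots> = L * norm (mat_word A w *v u) / norm u"
      using \<open>0 < r\<close> u(2) by (simp add: K_def L_def field_simps)
    finally have "onorm (\<lambda>x. mat_word A w *v x) * norm u \<le> L * norm (mat_word A w *v u)"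
      using u(2) by (simp add: pos_le_divide_eq)
    also have "\<dots> \<le> max 1 L * norm (mat_word A w *v u)"
      by (intro mult_right_mono) auto
    finally show "onorm (\<lambda>x. mat_word A w *v x) * norm u \<le> max 1 L * norm (mat_word A w *v u)" .
  qed simp
qed

end

section \<open>The local Hoelder exponent\<close>

definition holder_quotient :: "(real \<Rightarrow> 'a::real_normed_vector) \<Rightarrow> real \<Rightarrow> real \<Rightarrow> ereal" where
  "holder_quotient v x y = (if v x = v y then \<infinity> else ereal (ln (norm (v x - v y)) / ln \<bar>x - y\<bar>))"

lemma holder_exp_eq_Liminf: "holder_exp v x = Liminf (at x within {0..1}) (holder_quotient v x)"
  by (simp add: holder_exp_def holder_quotient_def[abs_def])

definition norm_growth_ratio :: "(nat \<Rightarrow> real^'n^'n) \<Rightarrow> (nat \<Rightarrow> real) \<Rightarrow> (nat \<Rightarrow> nat) \<Rightarrow> nat \<Rightarrow> real" where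
  "norm_growth_ratio A lam \<omega> k =
     ln (onorm (\<lambda>x. mat_word A (prefix \<omega> k) *v x)) / ln (wprod lam (prefix \<omega> k))"

lemma Liminf_le_limsup_of_frequently:
  fixes Q :: "real \<Rightarrow> ereal" and r e d :: "nat \<Rightarrow> real"
  assumes freq: "\<exists>\<^sub>F k in sequentially. \<exists>s\<in>S. s \<noteq> x0 \<and> dist s x0 \<le> d k \<and> Q s \<le> ereal (r k + e k)"
    and "d \<longlonglongrightarrow> 0" "e \<longlonglongrightarrow> 0"
  shows "Liminf (at x0 within S) Q \<le> limsup (\<lambda>k. ereal (r k))"
proof (rule ccontr)
  assume "\<not> ?thesis"
  then have "limsup (\<lambda>k. ereal (r k)) < Liminf (at x0 within S) Q"
    by (simp add: not_le)
  from ereal_dense2[OF this] obtain c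
    where c: "limsup (\<lambda>k. ereal (r k)) < ereal c" "ereal c < Liminf (at x0 within S) Q"
    by blast
  from ereal_dense2[OF c(1)] obtain c1
    where c1: "limsup (\<lambda>k. ereal (r k)) < ereal c1" "c1 < c"
    by auto
  then have "0 < c - c1"
    by simp
  obtain \<delta> where "0 < \<delta>" and \<delta>: "\<And>s. s \<in> S \<Longrightarrow> s \<noteq> x0 \<Longrightarrow> dist s x0 < \<delta> \<Longrightarrow> ereal c < Q s"
    using less_LiminfD[OF c(2)] unfolding eventually_at by blast
  have "\<forall>\<^sub>F k in sequentially. r k < c1 \<and> e k < c - c1 \<and> d k < \<delta>"
    using Limsup_lessD[OF c1(1)] order_tendstoD(2)[OF assms(3) \<open>0 < c - c1\<close>]
      order_tendstoD(2)[OF assms(2) \<open>0 < \<delta>\<close>]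
    by eventually_elim auto
  from frequently_eventually_conj[OF freq this] obtain k s where
    "s \<in> S" "s \<noteq> x0" "dist s x0 < \<delta>" "Q s \<le> ereal (r k + e k)" "r k + e k < c"
    by (auto dest!: frequently_ex)
  then have "ereal c < ereal (r k + e k)"
    using \<delta> order_less_le_trans by blast
  then show False
    using \<open>r k + e k < c\<close> by simp
qed

lemma ln_quotient_le:
  fixes a K b d l :: real
  assumes "0 < a" "a < 1" "1 \<le> K" "a / K \<le> b" "0 < d" "d \<le> l" "l < 1"
  shows "ln b / ln d \<le> ln a / ln l + ln K / - ln l"
proof -
  have "ln a - ln K \<le> ln b"
    using ln_mono[OF assms(4)] assms(1,3) by (simp add: ln_div)
  have "ln d \<le> ln l" "ln l < 0" "ln d < 0"
    using assms(5-7) by (auto intro: ln_mono)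
  have "ln a - ln K < 0"
    using assms(1-3) by simp
  have "ln b / ln d \<le> (ln a - ln K) / ln d"
    using \<open>ln a - ln K \<le> ln b\<close> \<open>ln d < 0\<close> by (intro divide_right_mono_neg) auto
  also have "\<dots> \<le> (ln a - ln K) / ln l"
    using \<open>ln d \<le> ln l\<close> \<open>ln l < 0\<close> \<open>ln d < 0\<close> \<open>ln a - ln K < 0\<close>
    by (intro divide_left_mono_neg mult_neg_neg) auto
  finally show ?thesis
    by (simp add: diff_divide_distrib)
qed

locale zipper_setting = affine_zipper N lam A t f v c + dominated N A M
  for N lam A t f v c M
begin

lemma pullback_point:
  assumes \<omega>: "\<omega> \<in> seqspace N" and \<Gamma>: "compact \<Gamma>" "\<Gamma> = (\<Union>i<N. f i ` \<Gamma>)" and "y \<in> \<Gamma>"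
  obtains s where "s \<in> {0..1}" "dist s (pi_sym lam \<omega>) \<le> wprod lam (prefix \<omega> k)"
    "v (pi_sym lam \<omega>) - v s = mat_word A (prefix \<omega> k) *v (Pi_sym f (shift \<omega> k) - y)"
proof -
  let ?W = "prefix \<omega> k" and ?p = "pi_sym lam (shift \<omega> k)"
  have W: "set ?W \<subseteq> {..<N}" and p: "?p \<in> {0..1}"
    using set_prefix_subset[OF \<omega>] pi_sym_in_unit[OF shift_in_seqspace[OF \<omega>]] .
  obtain s' where s': "s' \<in> {0..1}" "y = v s'"
    using attractor_subset_curve[OF \<Gamma>] \<open>y \<in> \<Gamma>\<close> by blast
  let ?s = "fun_word (gmap lam) ?W s'"
  have "dist ?s (pi_sym lam \<omega>) = wprod lam ?W * \<bar>s' - ?p\<bar>"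
    using pi_sym_prefix_shift[OF \<omega>, of k] gmap_word_diff[of lam ?W s' ?p] wprod_prefix_pos[OF \<omega>, of k]
    by (simp add: dist_real_def abs_mult)
  also have "\<dots> \<le> wprod lam ?W"
    using s'(1) p wprod_prefix_pos[OF \<omega>, of k] by (intro mult_left_le) auto
  finally have "dist ?s (pi_sym lam \<omega>) \<le> wprod lam ?W" .
  have "v (pi_sym lam \<omega>) = fun_word f ?W (Pi_sym f (shift \<omega> k))"
    using pi_sym_prefix_shift[OF \<omega>, of k] v_gmap_word[OF W p] v_pi_sym[OF shift_in_seqspace[OF \<omega>]]
    by simp
  moreover have "v ?s = fun_word f ?W y"
    using v_gmap_word[OF W s'(1)] s'(2) by simp
  ultimately have "v (pi_sym lam \<omega>) - v ?s = mat_word A ?W *v (Pi_sym f (shift \<omega> k) - y)"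
    by (simp add: fun_word_affine_diff[OF f_affine])
  then show ?thesis
    using that gmap_word_in_unit[OF W s'(1)] \<open>dist ?s (pi_sym lam \<omega>) \<le> wprod lam ?W\<close> by blast
qed

lemma onorm_mat_word_bounds:
  assumes "w \<noteq> []" "set w \<subseteq> {..<N}"
  shows "0 < onorm (\<lambda>x. mat_word A w *v x)" "onorm (\<lambda>x. mat_word A w *v x) < 1"
proof -
  obtain u where "u \<in> Mcone"
    using Mcone_nonempty by blast
  then have "mat_word A w *v u \<noteq> 0"
    using mat_word_Mcone_closure[OF assms(2)] Mcone_subset_closure Mcone_closure_nonzero by blast
  then show "0 < onorm (\<lambda>x. mat_word A w *v x)"
    using onorm_pos_lt[OF matrix_vector_mul_bounded_linear] by fastforce
  have "onorm (\<lambda>x. mat_word A w *v x) \<le> c ^ length w"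
    using onorm_le[OF norm_mat_word_le[where A=A and c=c, OF norm_A_le c_nonneg assms(2)]] .
  also have "\<dots> < 1"
    using assms(1) c_nonneg c_less_1 by (simp add: power_less_one_iff)
  finally show "onorm (\<lambda>x. mat_word A w *v x) < 1" .
qed

text \<open>The difference v(x) - v(s) is the image of a cone vector under A_{i|k}, so dominated
  splitting lets the operator norm of A_{i|k} control it from below.\<close>

lemma holder_quotient_le_at_scale:
  assumes \<omega>: "\<omega> \<in> seqspace N" and \<Gamma>: "compact \<Gamma>" "\<Gamma> = (\<Union>i<N. f i ` \<Gamma>)"
    and \<Lambda>: "1 \<le> \<Lambda>" "\<And>w u. w \<noteq> [] \<Longrightarrow> set w \<subseteq> {..<N} \<Longrightarrow> u \<in> Mcone \<Longrightarrow>
       onorm (\<lambda>x. mat_word A w *v x) * norm u \<le> \<Lambda> * norm (mat_word A w *v u)"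
    and "1 \<le> n" "1 \<le> k" "wprod lam (prefix \<omega> k) < 1"
    and y: "y \<in> \<Gamma>" "y \<in> cone_at M (Pi_sym f (shift \<omega> k))" "y \<notin> ball (Pi_sym f (shift \<omega> k)) (1 / real n)"
  shows "\<exists>s\<in>{0..1}. s \<noteq> pi_sym lam \<omega> \<and> dist s (pi_sym lam \<omega>) \<le> wprod lam (prefix \<omega> k) \<and>
    holder_quotient v (pi_sym lam \<omega>) s
      \<le> ereal (norm_growth_ratio A lam \<omega> k + ln (real n * \<Lambda>) / - ln (wprod lam (prefix \<omega> k)))"
proof -
  let ?W = "prefix \<omega> k" and ?x = "pi_sym lam \<omega>"
  let ?B = "mat_word A ?W" and ?u = "y - Pi_sym f (shift \<omega> k)"
  have W: "?W \<noteq> []" "set ?W \<subseteq> {..<N}"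
    using \<open>1 \<le> k\<close> set_prefix_subset[OF \<omega>] by (auto simp: prefix_def)
  obtain s where s: "s \<in> {0..1}" "dist s ?x \<le> wprod lam ?W"
    and vs: "v ?x - v s = ?B *v (Pi_sym f (shift \<omega> k) - y)"
    using pullback_point[OF \<omega> \<Gamma> y(1)] by blast
  have "?u \<in> Mcone"
    using y(2) by (auto simp: cone_at_def Mcone_def)
  have "1 / real n \<le> norm ?u"
    using y(3) norm_minus_commute[of y "Pi_sym f (shift \<omega> k)"] by (simp add: dist_norm)
  have norm_vs: "norm (v ?x - v s) = norm (?B *v ?u)"
    using vs by (simp add: matrix_vector_mult_diff_distrib norm_minus_commute)
  have "?B *v ?u \<noteq> 0"
    using mat_word_Mcone_closure[OF W(2)] Mcone_subset_closure Mcone_closure_nonzero \<open>?u \<in> Mcone\<close>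
    by blast
  then have "v ?x \<noteq> v s" "s \<noteq> ?x"
    using norm_vs by auto
  note onorm_pos = onorm_mat_word_bounds(1)[OF W] and onorm_lt = onorm_mat_word_bounds(2)[OF W]
  have "1 \<le> real n * \<Lambda>"
    using \<Lambda>(1) \<open>1 \<le> n\<close> mult_mono[of 1 "real n" 1 \<Lambda>] by simp
  have "onorm (\<lambda>x. ?B *v x) / (real n * \<Lambda>) \<le> norm (?B *v ?u)"
  proof -
    have "onorm (\<lambda>x. ?B *v x) * (1 / real n) \<le> onorm (\<lambda>x. ?B *v x) * norm ?u"
      using \<open>1 / real n \<le> norm ?u\<close> onorm_pos by (intro mult_left_mono) auto
    also have "\<dots> \<le> \<Lambda> * norm (?B *v ?u)"
      using \<Lambda>(2)[OF W \<open>?u \<in> Mcone\<close>] .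
    finally show ?thesis
      using \<Lambda>(1) \<open>1 \<le> n\<close> by (simp add: field_simps)
  qed
  moreover have "0 < dist s ?x"
    using \<open>s \<noteq> ?x\<close> by simp
  ultimately have "ln (norm (?B *v ?u)) / ln (dist s ?x) \<le> norm_growth_ratio A lam \<omega> k
      + ln (real n * \<Lambda>) / - ln (wprod lam ?W)"
    unfolding norm_growth_ratio_def
    using ln_quotient_le[OF onorm_pos onorm_lt \<open>1 \<le> real n * \<Lambda>\<close> _ _ s(2) \<open>wprod lam ?W < 1\<close>]
    by blast
  moreover have "dist s ?x = \<bar>?x - s\<bar>"
    by (simp add: dist_real_def abs_minus_commute)
  ultimately show ?thesis
    using s \<open>s \<noteq> ?x\<close> \<open>v ?x \<noteq> v s\<close> norm_vs by (auto simp: holder_quotient_def)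
qed

lemma holder_exp_le_of_frequently:
  assumes \<omega>: "\<omega> \<in> seqspace N" and \<Gamma>: "compact \<Gamma>" "\<Gamma> = (\<Union>i<N. f i ` \<Gamma>)" and "1 \<le> n"
    and freq: "\<exists>\<^sub>F k in sequentially. \<exists>y\<in>\<Gamma>. y \<in> cone_at M (Pi_sym f (shift \<omega> k))
      \<and> y \<notin> ball (Pi_sym f (shift \<omega> k)) (1 / real n)"
  shows "holder_exp v (pi_sym lam \<omega>) \<le> limsup (\<lambda>k. ereal (norm_growth_ratio A lam \<omega> k))"
proof -
  obtain \<Lambda> where \<Lambda>: "1 \<le> \<Lambda>" "\<And>w u. w \<noteq> [] \<Longrightarrow> set w \<subseteq> {..<N} \<Longrightarrow> u \<in> Mcone \<Longrightarrow>
       onorm (\<lambda>x. mat_word A w *v x) * norm u \<le> \<Lambda> * norm (mat_word A w *v u)"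
    using onorm_mat_word_Mcone by blast
  have "\<forall>\<^sub>F k in sequentially. 1 \<le> k \<and> wprod lam (prefix \<omega> k) < 1"
    using eventually_ge_at_top order_tendstoD(2)[OF wprod_prefix_tendsto_0[OF \<omega>] zero_less_one]
    by eventually_elim auto
  from frequently_eventually_conj[OF freq this]
  have "\<exists>\<^sub>F k in sequentially. \<exists>s\<in>{0..1}. s \<noteq> pi_sym lam \<omega>
      \<and> dist s (pi_sym lam \<omega>) \<le> wprod lam (prefix \<omega> k)
      \<and> holder_quotient v (pi_sym lam \<omega>) s
        \<le> ereal (norm_growth_ratio A lam \<omega> k + ln (real n * \<Lambda>) / - ln (wprod lam (prefix \<omega> k)))"
    by (rule frequently_elim1)
      (use holder_quotient_le_at_scale[OF \<omega> \<Gamma> \<Lambda> \<open>1 \<le> n\<close>] in blast)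
  moreover have "(\<lambda>k. ln (real n * \<Lambda>) / - ln (wprod lam (prefix \<omega> k))) \<longlonglongrightarrow> 0"
    using ln_wprod_prefix_tendsto[OF \<omega>]
    by (intro tendsto_divide_0[OF tendsto_const] filterlim_at_top_imp_at_infinity)
  ultimately show ?thesis
    unfolding holder_exp_eq_Liminf
    by (rule Liminf_le_limsup_of_frequently[OF _ wprod_prefix_tendsto_0[OF \<omega>]])
qed

end

theorem lemma3p3:
  fixes N :: nat and A :: "nat \<Rightarrow> real^'n^'n" and t z :: "nat \<Rightarrow> real^'n"
    and lam :: "nat \<Rightarrow> real" and \<Gamma> :: "(real^'n) set" and v :: "real \<Rightarrow> real^'n"
    and M :: "(real^'n^'n) set" and \<omega> :: "nat \<Rightarrow> nat"
  defines "f \<equiv> \<lambda>i x. A i *v x + t i"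
  assumes inv: "\<forall>i<N. invertible (A i)"
    and contr: "\<forall>i<N. \<exists>c<1. \<forall>x y. dist (f i x) (f i y) \<le> c * dist x y"
    and zip: "\<forall>i<N. f i (z 0) = z i \<and> f i (z N) = z (Suc i)"
    and attr: "compact \<Gamma>" "\<Gamma> \<noteq> {}" "\<Gamma> = (\<Union>i<N. f i ` \<Gamma>)"
    and lam: "\<forall>i<N. lam i > 0" "(\<Sum>i<N. lam i) = 1"
    and vcont: "continuous_on {0..1} v"
    and veq: "\<forall>i<N. \<forall>x\<in>(\<lambda>y. lam i * y + gam lam i) ` {0..1}.
                v x = f i (v ((x - gam lam i) / lam i))"
    and dom: "dominated_index1 N A M"
    and nondeg: "non_degenerate N A f z \<Gamma> M"
    and \<omega>: "\<omega> \<in> seqspace N" "\<omega> \<notin> bad_set N f \<Gamma> M"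
  shows "holder_exp v (pi_sym lam \<omega>) \<le>
    limsup (\<lambda>n. ereal (ln (onorm (\<lambda>x. mat_word A (prefix \<omega> n) *v x)) / ln (wprod lam (prefix \<omega> n))))"
proof -
  have "N \<noteq> 1"
  proof
    assume "N = 1"
    then obtain c where "c < 1" "dist (f 0 (z 0)) (f 0 (z 1)) \<le> c * dist (z 0) (z 1)"
      using contr by auto
    then show False
      using contraction_fixpoints_eq[of "f 0"] zip nondeg \<open>N = 1\<close> by (auto simp: non_degenerate_def)
  qed
  obtain c where c: "0 \<le> c" "c < 1" "\<And>i u. i < N \<Longrightarrow> norm (A i *v u) \<le> c * norm u"
    using uniform_contraction_constant contr unfolding f_def by blast
  interpret zipper_setting N lam A t f v c M
  proof unfold_locales
    show "v (gmap lam i s) = f i (v s)" if "i < N" "s \<in> {0..1}" for i s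
      using veq that lam(1) by (force simp: gmap_def)
  qed (use lam weights_less_1[OF lam \<open>N \<noteq> 1\<close>] c vcont dom inv in \<open>auto simp: f_def\<close>)
  from \<omega>(2) obtain n l m where "1 \<le> n" "\<not> (\<exists>K. \<forall>k\<ge>K. shift \<omega> k \<in> bad_nlm N f \<Gamma> M n l m)"
    unfolding bad_set_def by blast
  then have "\<exists>\<^sub>F k in sequentially. \<exists>y\<in>\<Gamma>. y \<in> cone_at M (Pi_sym f (shift \<omega> k))
      \<and> y \<notin> ball (Pi_sym f (shift \<omega> k)) (1 / real n)"
    unfolding frequently_sequentially bad_nlm_def using shift_in_seqspace[OF \<omega>(1)] by blast
  from holder_exp_le_of_frequently[OF \<omega>(1) attr(1,3) \<open>1 \<le> n\<close> this] show ?thesis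
    by (simp add: norm_growth_ratio_def)
qed

end
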